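(* Let $r>0$, let $(w_x,w_y)\in\mathbb{R}^2$ with $v_w=\sqrt{w_x^2+w_y^2}\in(0,1)$, and let $(x_f,y_f,\theta_f)$ be any goal pose with $(x_f,y_f)\in\mathbb{R}^2$ and $\theta_f\in[0,2\pi)$. Then there exists a $4\pi$-arc $LSL$ path that reaches the goal pose $(x_f,y_f,\theta_f)$ from the start pose $(0,0,0)$, and there also exists a $4\pi$-arc $RSR$ path that reaches it. That is, each of the two path types individually provides full reachability.
   Context: Setting: a vehicle moves in the plane at unit speed with minimum turning radius $r>0$, in a steady current of velocity $(w_x,w_y)$ whose speed is $v_w=\sqrt{w_x^2+w_y^2}$. It is assumed throughout that $0<v_w<1$. The start pose is $(0,0,0)$ and a goal pose is $(x_f,y_f,\theta_f)$ with $\theta_f\in[0,2\pi)$. $LSL$ paths: such a path has parameters $(\alpha,\beta,\gamma)$ with $\alpha,\gamma\ge 0$ and $\beta\ge0$. It consists of a maximal-curvature left arc of turning angle $\alpha$, then a straight segment of length $\beta$, then a left arc of turning angle $\gamma$, all traversed in the frame moving with the current. Its travel time is $T=r(\alpha+\gamma)+\beta$. It reaches the goal pose iff there is $k\in\mathbb{Z}$ such that $\alpha+\gamma=2k\pi+\theta_f$, $x_f-w_xT=r\sin\theta_f+\beta\cos\alpha$, and $y_f-w_yT=r(1-\cos\theta_f)+\beta\sin\alpha$. $RSR$ paths: such a path has parameters $(\alpha,\beta,\gamma)$ with $\alpha,\gamma\ge0$ and $\beta\ge 0$, right arcs, and travel time $T=r(\alpha+\gamma)+\beta$. It reaches the goal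 pose iff there is $k\in\mathbb{Z}$ such that $-\alpha-\gamma=2k\pi+\theta_f$, $x_f-w_xT=-r\sin\theta_f+\beta\cos\alpha$, and $y_f-w_yT=-r(1-\cos\theta_f)-\beta\sin\alpha$. Arc-range classes: an $LSL$ or $RSR$ path is called a $2\pi$-arc path if $\alpha,\gamma\in[0,2\pi)$, and a $4\pi$-arc path if $\alpha,\gamma\in[0,4\pi)$. *)

theory Defs
  imports Complex_Main
begin

definition travel_time :: "real \<Rightarrow> real \<Rightarrow> real \<Rightarrow> real \<Rightarrow> real" where
  "travel_time r \<alpha> \<beta> \<gamma> = r * (\<alpha> + \<gamma>) + \<beta>"

definition LSL_reaches ::
  "real \<Rightarrow> real \<Rightarrow> real \<Rightarrow> real \<Rightarrow> real \<Rightarrow> real \<Rightarrow> real \<Rightarrow> real \<Rightarrow> real \<Rightarrow> bool" where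
  "LSL_reaches r wx wy xf yf thf \<alpha> \<beta> \<gamma> \<longleftrightarrow>
     \<alpha> \<ge> 0 \<and> \<beta> \<ge> 0 \<and> \<gamma> \<ge> 0 \<and>
     (\<exists>k::int. \<alpha> + \<gamma> = 2 * real_of_int k * pi + thf \<and>
        xf - wx * travel_time r \<alpha> \<beta> \<gamma> = r * sin thf + \<beta> * cos \<alpha> \<and>
        yf - wy * travel_time r \<alpha> \<beta> \<gamma> = r * (1 - cos thf) + \<beta> * sin \<alpha>)"

definition RSR_reaches ::
  "real \<Rightarrow> real \<Rightarrow> real \<Rightarrow> real \<Rightarrow> real \<Rightarrow> real \<Rightarrow> real \<Rightarrow> real \<Rightarrow> real \<Rightarrow> bool" where
  "RSR_reaches r wx wy xf yf thf \<alpha> \<beta> \<gamma> \<longleftrightarrow>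
     \<alpha> \<ge> 0 \<and> \<beta> \<ge> 0 \<and> \<gamma> \<ge> 0 \<and>
     (\<exists>k::int. - \<alpha> - \<gamma> = 2 * real_of_int k * pi + thf \<and>
        xf - wx * travel_time r \<alpha> \<beta> \<gamma> = - r * sin thf + \<beta> * cos \<alpha> \<and>
        yf - wy * travel_time r \<alpha> \<beta> \<gamma> = - r * (1 - cos thf) - \<beta> * sin \<alpha>)"

definition four_pi_arc :: "real \<Rightarrow> real \<Rightarrow> bool" where
  "four_pi_arc \<alpha> \<gamma> \<longleftrightarrow> \<alpha> \<in> {0..<4*pi} \<and> \<gamma> \<in> {0..<4*pi}"

end

(*
  Fix the total turning angle S = alpha + gamma as the representative of thf mod 2 pi in
  [2 pi, 4 pi). Both arcs together then take time r S, and what remains is the vector p from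
  the arc contributions (drifted by r S w) to the goal. The straight segment must satisfy
  p - beta w = beta (cos alpha, sin alpha), i.e. |p - beta w| = beta, which has a solution
  beta >= 0 by the intermediate value theorem because |w| < 1. The heading alpha is the
  argument of p - beta w in [0, 2 pi), and gamma = S - alpha lies in (0, 4 pi).
  An RSR path is the reflection of an LSL path in the x-axis, so it suffices to treat LSL.
*)
theory Submission
  imports Defs "HOL-Analysis.Analysis"
begin

lemma ex_nonneg_norm_diff_scaleR_eq:
  fixes p w :: "'a::real_normed_vector"
  assumes "norm w < 1"
  shows "\<exists>\<beta>\<ge>0. norm (p - \<beta> *\<^sub>R w) = \<beta>"
proof -
  define f where "f \<beta> = norm (p - \<beta> *\<^sub>R w) - \<beta>" for \<beta>
  define b where "b = norm p / (1 - norm w)"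
  have "b \<ge> 0"
    using assms by (simp add: b_def)
  have "f b \<le> norm p + b * norm w - b"
    unfolding f_def using norm_triangle_ineq4[of p "b *\<^sub>R w"] \<open>b \<ge> 0\<close> by simp
  also have "\<dots> = 0"
    using assms by (simp add: b_def field_simps)
  finally have "f b \<le> 0" .
  moreover have "0 \<le> f 0"
    by (simp add: f_def)
  moreover have "continuous_on {0..b} f"
    unfolding f_def by (intro continuous_intros)
  ultimately obtain \<beta> where "0 \<le> \<beta>" "f \<beta> = 0"
    using IVT2'[of f b 0 0] \<open>b \<ge> 0\<close> by blast
  then show ?thesis
    by (auto simp: f_def)
qed

lemma exists_congruent_turn_2pi_4pi:
  fixes \<theta> :: real
  obtains k :: int where "2 * pi \<le> 2 * real_of_int k * pi + \<theta>" "2 * real_of_int k * pi + \<theta> < 4 * pi"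
proof
  define k where "k = 1 - \<lfloor>\<theta> / (2 * pi)\<rfloor>"
  have "\<lfloor>\<theta> / (2 * pi)\<rfloor> * (2 * pi) \<le> \<theta>" "\<theta> < (\<lfloor>\<theta> / (2 * pi)\<rfloor> + 1) * (2 * pi)"
    by (simp_all add: floor_divide_lower floor_divide_upper)
  then show "2 * pi \<le> 2 * real_of_int k * pi + \<theta>" "2 * real_of_int k * pi + \<theta> < 4 * pi"
    unfolding k_def by (simp_all add: algebra_simps)
qed

lemma LSL_four_pi_arc_path_exists:
  fixes r wx wy xf yf thf :: real
  assumes "wx\<^sup>2 + wy\<^sup>2 < 1"
  shows "\<exists>\<alpha> \<beta> \<gamma>. four_pi_arc \<alpha> \<gamma> \<and> LSL_reaches r wx wy xf yf thf \<alpha> \<beta> \<gamma>"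
proof -
  obtain k :: int where k: "2 * pi \<le> 2 * real_of_int k * pi + thf" "2 * real_of_int k * pi + thf < 4 * pi"
    using exists_congruent_turn_2pi_4pi .
  define S where "S = 2 * real_of_int k * pi + thf"
  define w where "w = Complex wx wy"
  define p where "p = Complex (xf - r * sin thf - r * S * wx) (yf - r * (1 - cos thf) - r * S * wy)"
  have "norm w < 1"
    using assms by (simp add: w_def cmod_def)
  then obtain \<beta> where "\<beta> \<ge> 0" and \<beta>: "cmod (p - \<beta> *\<^sub>R w) = \<beta>"
    using ex_nonneg_norm_diff_scaleR_eq by blast
  define \<alpha> where "\<alpha> = Arg2pi (p - \<beta> *\<^sub>R w)"
  have "0 \<le> \<alpha>" "\<alpha> < 2 * pi"
    by (simp_all add: \<alpha>_def Arg2pi_ge_0 Arg2pi_lt_2pi)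
  have "\<beta> * cos \<alpha> = Re (p - \<beta> *\<^sub>R w)" "\<beta> * sin \<alpha> = Im (p - \<beta> *\<^sub>R w)"
    unfolding \<alpha>_def using cos_Arg2pi sin_Arg2pi \<beta> by metis+
  then have "xf - wx * travel_time r \<alpha> \<beta> (S - \<alpha>) = r * sin thf + \<beta> * cos \<alpha>"
    "yf - wy * travel_time r \<alpha> \<beta> (S - \<alpha>) = r * (1 - cos thf) + \<beta> * sin \<alpha>"
    by (simp_all add: travel_time_def p_def w_def algebra_simps)
  then have "LSL_reaches r wx wy xf yf thf \<alpha> \<beta> (S - \<alpha>)"
    using \<open>\<beta> \<ge> 0\<close> \<open>0 \<le> \<alpha>\<close> \<open>\<alpha> < 2 * pi\<close> k
    unfolding LSL_reaches_def by (intro conjI exI[of _ k]) (simp_all add: S_def)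
  moreover have "four_pi_arc \<alpha> (S - \<alpha>)"
    using \<open>0 \<le> \<alpha>\<close> \<open>\<alpha> < 2 * pi\<close> k by (auto simp: four_pi_arc_def S_def)
  ultimately show ?thesis
    by blast
qed

lemma RSR_reaches_iff_mirrored_LSL_reaches:
  "RSR_reaches r wx wy xf yf thf \<alpha> \<beta> \<gamma> \<longleftrightarrow> LSL_reaches r wx (- wy) xf (- yf) (- thf) \<alpha> \<beta> \<gamma>"
proof -
  have "- \<alpha> - \<gamma> = 2 * real_of_int k * pi + thf \<longleftrightarrow> \<alpha> + \<gamma> = 2 * real_of_int (- k) * pi + - thf"
    for k :: int
    by auto
  then have "(\<exists>k::int. - \<alpha> - \<gamma> = 2 * real_of_int k * pi + thf) \<longleftrightarrow>
        (\<exists>k::int. \<alpha> + \<gamma> = 2 * real_of_int k * pi + - thf)"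
    by (metis minus_minus)
  then show ?thesis
    unfolding RSR_reaches_def LSL_reaches_def by auto
qed

theorem theorem1:
  fixes r wx wy xf yf thf :: real
  assumes "r > 0"
    and "0 < sqrt (wx^2 + wy^2)" and "sqrt (wx^2 + wy^2) < 1"
    and "0 \<le> thf" and "thf < 2 * pi"
  shows "(\<exists>\<alpha> \<beta> \<gamma>. four_pi_arc \<alpha> \<gamma> \<and> LSL_reaches r wx wy xf yf thf \<alpha> \<beta> \<gamma>) \<and>
         (\<exists>\<alpha> \<beta> \<gamma>. four_pi_arc \<alpha> \<gamma> \<and> RSR_reaches r wx wy xf yf thf \<alpha> \<beta> \<gamma>)"
proof
  have "wx\<^sup>2 + wy\<^sup>2 < 1"
    using assms(3) by simp
  then show "\<exists>\<alpha> \<beta> \<gamma>. four_pi_arc \<alpha> \<gamma> \<and> LSL_reaches r wx wy xf yf thf \<alpha> \<beta> \<gamma>"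
    by (rule LSL_four_pi_arc_path_exists)
  from \<open>wx\<^sup>2 + wy\<^sup>2 < 1\<close> have "wx\<^sup>2 + (- wy)\<^sup>2 < 1"
    by simp
  then show "\<exists>\<alpha> \<beta> \<gamma>. four_pi_arc \<alpha> \<gamma> \<and> RSR_reaches r wx wy xf yf thf \<alpha> \<beta> \<gamma>"
    unfolding RSR_reaches_iff_mirrored_LSL_reaches by (rule LSL_four_pi_arc_path_exists)
qed

end
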